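(* Let $\mathfrak h\subseteq\Phi^+$ be a Hessenberg set and let $v,w\in W$ with $v$ a cover of $w$. Then $|N_v|-|\Phi^+\setminus\mathfrak h|\le|N^{\mathfrak h}_v|\le|N^{\mathfrak h}_w|+1$.
   Context: $\Phi$ is a crystallographic root system in a real Euclidean space with base $\Delta$, positive roots $\Phi^+$, $\Phi^-=-\Phi^+$, Weyl group $W$ with length $\ell$, and $s_\alpha$ the reflection through $\alpha$. Write $\alpha\prec\beta$ if $\beta-\alpha$ is a sum of positive roots. A Hessenberg set is a subset $\mathfrak h\subseteq\Phi^+$ whose complement in $\Phi^+$ is upward closed for $\prec$. For $w\in W$, $N_w=\{\beta\in\Phi^+: w^{-1}\beta\in\Phi^-\}$ and $N^{\mathfrak h}_w=\{\beta\in\Phi^+: w^{-1}\beta\in-\mathfrak h\}$. We say $v$ is a cover of $w$ if $v=s_\alpha w$ for some $\alpha\in\Phi^+$ with $v^{-1}\alpha\in\Phi^-$ and $\ell(v)=\ell(w)+1$. *)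

theory Defs
  imports "HOL-Analysis.Analysis"
begin

definition rs_refl :: "'a::euclidean_space \<Rightarrow> 'a \<Rightarrow> 'a" where
  "rs_refl \<alpha> x = x - (2 * (x \<bullet> \<alpha>) / (\<alpha> \<bullet> \<alpha>)) *\<^sub>R \<alpha>"

definition crystallographic_root_system :: "'a::euclidean_space set \<Rightarrow> bool" where
  "crystallographic_root_system \<Phi> \<longleftrightarrow>
     finite \<Phi> \<and> 0 \<notin> \<Phi> \<and> span \<Phi> = UNIV \<and>
     (\<forall>\<alpha>\<in>\<Phi>. \<forall>c::real. c *\<^sub>R \<alpha> \<in> \<Phi> \<longrightarrow> c = 1 \<or> c = -1) \<and>
     (\<forall>\<alpha>\<in>\<Phi>. rs_refl \<alpha> ` \<Phi> = \<Phi>) \<and>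
     (\<forall>\<alpha>\<in>\<Phi>. \<forall>\<beta>\<in>\<Phi>. 2 * (\<beta> \<bullet> \<alpha>) / (\<alpha> \<bullet> \<alpha>) \<in> \<int>)"

definition is_base :: "'a::euclidean_space set \<Rightarrow> 'a set \<Rightarrow> bool" where
  "is_base \<Phi> \<Delta> \<longleftrightarrow> \<Delta> \<subseteq> \<Phi> \<and> independent \<Delta> \<and>
     (\<forall>\<beta>\<in>\<Phi>. \<exists>c::'a \<Rightarrow> int. \<beta> = (\<Sum>\<delta>\<in>\<Delta>. of_int (c \<delta>) *\<^sub>R \<delta>) \<and>
        ((\<forall>\<delta>\<in>\<Delta>. c \<delta> \<ge> 0) \<or> (\<forall>\<delta>\<in>\<Delta>. c \<delta> \<le> 0)))"

definition pos_roots :: "'a::euclidean_space set \<Rightarrow> 'a set \<Rightarrow> 'a set" where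
  "pos_roots \<Phi> \<Delta> = {\<beta>\<in>\<Phi>. \<exists>c::'a \<Rightarrow> int. \<beta> = (\<Sum>\<delta>\<in>\<Delta>. of_int (c \<delta>) *\<^sub>R \<delta>) \<and>
        (\<forall>\<delta>\<in>\<Delta>. c \<delta> \<ge> 0)}"

definition neg_roots :: "'a::euclidean_space set \<Rightarrow> 'a set \<Rightarrow> 'a set" where
  "neg_roots \<Phi> \<Delta> = uminus ` pos_roots \<Phi> \<Delta>"

inductive_set weyl_group :: "'a::euclidean_space set \<Rightarrow> ('a \<Rightarrow> 'a) set" for \<Phi> where
  weyl_id: "id \<in> weyl_group \<Phi>"
| weyl_step: "\<alpha> \<in> \<Phi> \<Longrightarrow> w \<in> weyl_group \<Phi> \<Longrightarrow> rs_refl \<alpha> \<circ> w \<in> weyl_group \<Phi>"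

definition weyl_length :: "'a::euclidean_space set \<Rightarrow> ('a \<Rightarrow> 'a) \<Rightarrow> nat" where
  "weyl_length \<Delta> w = (LEAST k. \<exists>xs. length xs = k \<and> set xs \<subseteq> \<Delta> \<and>
       w = foldr (\<lambda>\<alpha> f. rs_refl \<alpha> \<circ> f) xs id)"

definition root_prec :: "'a::euclidean_space set \<Rightarrow> 'a set \<Rightarrow> 'a \<Rightarrow> 'a \<Rightarrow> bool" where
  "root_prec \<Phi> \<Delta> \<alpha> \<beta> \<longleftrightarrow>
     (\<exists>xs. xs \<noteq> [] \<and> set xs \<subseteq> pos_roots \<Phi> \<Delta> \<and> \<beta> - \<alpha> = sum_list xs)"

definition hessenberg_set :: "'a::euclidean_space set \<Rightarrow> 'a set \<Rightarrow> 'a set \<Rightarrow> bool" where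
  "hessenberg_set \<Phi> \<Delta> \<hh> \<longleftrightarrow> \<hh> \<subseteq> pos_roots \<Phi> \<Delta> \<and>
     (\<forall>\<alpha>\<in>pos_roots \<Phi> \<Delta> - \<hh>. \<forall>\<beta>\<in>pos_roots \<Phi> \<Delta>.
         root_prec \<Phi> \<Delta> \<alpha> \<beta> \<longrightarrow> \<beta> \<in> pos_roots \<Phi> \<Delta> - \<hh>)"

definition inv_set :: "'a::euclidean_space set \<Rightarrow> 'a set \<Rightarrow> ('a \<Rightarrow> 'a) \<Rightarrow> 'a set" where
  "inv_set \<Phi> \<Delta> w = {\<beta>\<in>pos_roots \<Phi> \<Delta>. inv w \<beta> \<in> neg_roots \<Phi> \<Delta>}"

definition hess_inv_set :: "'a::euclidean_space set \<Rightarrow> 'a set \<Rightarrow> 'a set \<Rightarrow> ('a \<Rightarrow> 'a) \<Rightarrow> 'a set" where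
  "hess_inv_set \<Phi> \<Delta> \<hh> w = {\<beta>\<in>pos_roots \<Phi> \<Delta>. inv w \<beta> \<in> uminus ` \<hh>}"

definition is_cover :: "'a::euclidean_space set \<Rightarrow> 'a set \<Rightarrow> ('a \<Rightarrow> 'a) \<Rightarrow> ('a \<Rightarrow> 'a) \<Rightarrow> bool" where
  "is_cover \<Phi> \<Delta> v w \<longleftrightarrow>
     (\<exists>\<alpha>\<in>pos_roots \<Phi> \<Delta>. v = rs_refl \<alpha> \<circ> w \<and> inv v \<alpha> \<in> neg_roots \<Phi> \<Delta> \<and>
        weyl_length \<Delta> v = weyl_length \<Delta> w + 1)"

end

theory Submission
  imports Defs
begin

text \<open>Put \<open>a = w\<^sup>-\<^sup>1\<close>, so that \<open>v\<^sup>-\<^sup>1 = a s\<^sub>\<alpha>\<close>, and write \<open>inversions u\<close> for the positive roots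
  that \<open>u\<close> sends to negative ones; thus \<open>N\<^sub>v = inversions v\<^sup>-\<^sup>1\<close> and, by the deletion property of
  words in simple reflections, \<open>\<ell>(u) = |inversions u|\<close>.
  The lower bound holds for every \<open>v\<close>: \<open>\<beta> \<mapsto> -v\<^sup>-\<^sup>1\<beta>\<close> embeds \<open>N\<^sub>v - N\<^sup>\<hh>\<^sub>v\<close> into \<open>\<Phi>\<^sup>+ - \<hh>\<close>.
  For the upper bound fold by \<open>s\<^sub>\<alpha>\<close>, i.e. send \<open>\<gamma>\<close> to \<open>s\<^sub>\<alpha>\<gamma>\<close> if that is positive and to \<open>\<gamma>\<close>
  otherwise; this is injective on \<open>\<Phi>\<^sup>+\<close> and maps \<open>N\<^sup>\<hh>\<^sub>v - {\<alpha>}\<close> into \<open>N\<^sup>\<hh>\<^sub>w\<close>. The critical case is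
  \<open>s\<^sub>\<alpha>\<beta> < 0\<close>, where \<open>s\<^sub>\<alpha>\<beta> = \<beta> - m\<alpha>\<close> with \<open>m \<ge> 1\<close>. Then \<open>a\<beta> < 0\<close>, since otherwise the same
  folding would give \<open>\<ell>(v) \<ge> \<ell>(w) + 2\<close>; hence \<open>-a\<beta> \<prec> -a s\<^sub>\<alpha>\<beta> \<in> \<hh>\<close>, and \<open>-a\<beta> \<in> \<hh>\<close> because the
  complement of \<open>\<hh>\<close> is upward closed.\<close>

section \<open>Reflections\<close>

lemma rs_refl_linear: "linear (rs_refl a)"
  unfolding rs_refl_def
  by (auto intro!: linearI simp: algebra_simps inner_add_left add_divide_distrib scaleR_add_left)

lemma orthogonal_transformation_rs_refl: "orthogonal_transformation (rs_refl a)"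
proof -
  have "rs_refl a x \<bullet> rs_refl a y = x \<bullet> y" for x y
    unfolding rs_refl_def
    by (cases "a = 0") (simp_all add: inner_diff_left inner_diff_right algebra_simps divide_simps inner_commute)
  then show ?thesis
    unfolding orthogonal_transformation_def using rs_refl_linear by blast
qed

lemma rs_refl_self: "a \<noteq> 0 \<Longrightarrow> rs_refl a a = - a"
  unfolding rs_refl_def by (simp add: scaleR_2)

lemma rs_refl_rs_refl [simp]: "a \<noteq> 0 \<Longrightarrow> rs_refl a (rs_refl a x) = x"
  unfolding rs_refl_def by (simp add: inner_diff_left algebra_simps divide_simps)

lemma rs_refl_uminus: "rs_refl (- a) = rs_refl a"
  by (simp add: fun_eq_iff rs_refl_def)

lemma inv_rs_refl: "a \<noteq> 0 \<Longrightarrow> inv (rs_refl a) = rs_refl a"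
  by (rule inv_unique_comp) (auto simp: fun_eq_iff)

lemma rs_refl_conj:
  assumes "orthogonal_transformation u"
  shows "rs_refl (u a) (u x) = u (rs_refl a x)"
proof -
  have "linear u" and "\<And>x y. u x \<bullet> u y = x \<bullet> y"
    using assms by (auto simp: orthogonal_transformation_def)
  then show ?thesis
    unfolding rs_refl_def by (simp add: linear_diff linear_scale)
qed

lemma rs_refl_conj_rs_refl:
  assumes "\<delta> \<noteq> 0"
  shows "rs_refl \<beta> = rs_refl \<delta> \<circ> (rs_refl (rs_refl \<delta> \<beta>) \<circ> rs_refl \<delta>)"
proof
  fix x
  have "rs_refl (rs_refl \<delta> \<beta>) (rs_refl \<delta> x) = rs_refl \<delta> (rs_refl \<beta> x)"
    by (rule rs_refl_conj[OF orthogonal_transformation_rs_refl])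
  then show "rs_refl \<beta> x = (rs_refl \<delta> \<circ> (rs_refl (rs_refl \<delta> \<beta>) \<circ> rs_refl \<delta>)) x"
    using assms by simp
qed

definition refl_word :: "'a::euclidean_space list \<Rightarrow> 'a \<Rightarrow> 'a" where
  "refl_word xs = foldr (\<lambda>\<alpha> f. rs_refl \<alpha> \<circ> f) xs id"

lemma refl_word_Nil [simp]: "refl_word [] = id"
  and refl_word_Cons [simp]: "refl_word (a # xs) = rs_refl a \<circ> refl_word xs"
  by (simp_all add: refl_word_def)

lemma refl_word_append: "refl_word (xs @ ys) = refl_word xs \<circ> refl_word ys"
  by (induction xs) (simp_all add: o_assoc)

lemma refl_word_snoc: "refl_word (xs @ [a]) = refl_word xs \<circ> rs_refl a"
  by (simp add: refl_word_append)

section \<open>Positive and negative roots\<close>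

locale based_root_system =
  fixes \<Phi> \<Delta> :: "'a::euclidean_space set"
  assumes root_system: "crystallographic_root_system \<Phi>" and base: "is_base \<Phi> \<Delta>"
begin

abbreviation Pos where "Pos \<equiv> pos_roots \<Phi> \<Delta>"
abbreviation Neg where "Neg \<equiv> neg_roots \<Phi> \<Delta>"

lemma finite_roots: "finite \<Phi>"
  and zero_notin_roots: "0 \<notin> \<Phi>"
  and rs_refl_root: "\<alpha> \<in> \<Phi> \<Longrightarrow> x \<in> \<Phi> \<Longrightarrow> rs_refl \<alpha> x \<in> \<Phi>"
  and cartan_Ints: "\<alpha> \<in> \<Phi> \<Longrightarrow> \<beta> \<in> \<Phi> \<Longrightarrow> 2 * (\<beta> \<bullet> \<alpha>) / (\<alpha> \<bullet> \<alpha>) \<in> \<int>"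
  and root_multiple: "\<alpha> \<in> \<Phi> \<Longrightarrow> c *\<^sub>R \<alpha> \<in> \<Phi> \<Longrightarrow> c = 1 \<or> c = -1"
  using root_system unfolding crystallographic_root_system_def by blast+

lemma base_subset_roots: "\<Delta> \<subseteq> \<Phi>"
  and independent_base: "independent \<Delta>"
  and root_base_expansion: "\<beta> \<in> \<Phi> \<Longrightarrow> \<exists>c::'a \<Rightarrow> int. \<beta> = (\<Sum>\<delta>\<in>\<Delta>. of_int (c \<delta>) *\<^sub>R \<delta>) \<and>
        ((\<forall>\<delta>\<in>\<Delta>. c \<delta> \<ge> 0) \<or> (\<forall>\<delta>\<in>\<Delta>. c \<delta> \<le> 0))"
  using base unfolding is_base_def by blast+

lemma finite_base: "finite \<Delta>"
  using base_subset_roots finite_roots finite_subset by blast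

lemma root_nonzero: "\<alpha> \<in> \<Phi> \<Longrightarrow> \<alpha> \<noteq> 0"
  using zero_notin_roots by auto

lemma base_nonzero: "\<delta> \<in> \<Delta> \<Longrightarrow> \<delta> \<noteq> 0"
  using base_subset_roots root_nonzero by blast

lemma uminus_root: "x \<in> \<Phi> \<Longrightarrow> - x \<in> \<Phi>"
  using rs_refl_root[of x x] rs_refl_self[of x] root_nonzero by auto

lemma rs_refl_root_eq:
  assumes "\<alpha> \<in> \<Phi>" "\<beta> \<in> \<Phi>"
  obtains m :: int where "of_int m = 2 * (\<beta> \<bullet> \<alpha>) / (\<alpha> \<bullet> \<alpha>)"
    and "rs_refl \<alpha> \<beta> = \<beta> - of_int m *\<^sub>R \<alpha>"
proof -
  obtain m where "2 * (\<beta> \<bullet> \<alpha>) / (\<alpha> \<bullet> \<alpha>) = of_int m"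
    using cartan_Ints[OF assms] by (elim Ints_cases)
  then show thesis using that unfolding rs_refl_def by simp
qed

definition nonneg_comb :: "'a \<Rightarrow> bool" where
  "nonneg_comb x \<longleftrightarrow> (\<exists>c::'a \<Rightarrow> int. x = (\<Sum>\<delta>\<in>\<Delta>. of_int (c \<delta>) *\<^sub>R \<delta>) \<and> (\<forall>\<delta>\<in>\<Delta>. c \<delta> \<ge> 0))"

lemma pos_roots_eq: "Pos = {\<beta>\<in>\<Phi>. nonneg_comb \<beta>}"
  unfolding pos_roots_def nonneg_comb_def ..

lemma neg_roots_iff: "x \<in> Neg \<longleftrightarrow> - x \<in> Pos"
  unfolding neg_roots_def by (auto simp: image_iff) (metis minus_minus)

lemma pos_roots_subset: "Pos \<subseteq> \<Phi>"
  unfolding pos_roots_eq by auto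

lemma finite_pos_roots: "finite Pos"
  using pos_roots_subset finite_roots finite_subset by blast

lemma base_coeff_unique:
  assumes "(\<Sum>\<delta>\<in>\<Delta>. of_int (c \<delta>) *\<^sub>R \<delta>) = (\<Sum>\<delta>\<in>\<Delta>. of_int (d \<delta>) *\<^sub>R (\<delta>::'a))" "\<delta> \<in> \<Delta>"
  shows "c \<delta> = d \<delta>"
proof -
  have "(\<Sum>\<delta>\<in>\<Delta>. (of_int (c \<delta>) - of_int (d \<delta>)) *\<^sub>R \<delta>) = 0"
    using assms(1) by (simp add: scaleR_diff_left sum_subtractf)
  moreover have "\<forall>e. (\<Sum>\<delta>\<in>\<Delta>. e \<delta> *\<^sub>R \<delta>) = 0 \<longrightarrow> (\<forall>\<delta>\<in>\<Delta>. e \<delta> = 0)"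
    using independent_base unfolding independent_explicit by blast
  ultimately have "\<forall>\<delta>\<in>\<Delta>. (of_int (c \<delta>) - of_int (d \<delta>) :: real) = 0"
    by (elim allE[where x = "\<lambda>\<delta>. of_int (c \<delta>) - of_int (d \<delta>)"]) simp
  then show ?thesis
    using assms(2) by simp
qed

lemma sum_base_single:
  assumes "\<delta> \<in> \<Delta>"
  shows "(\<Sum>d\<in>\<Delta>. of_int (if d = \<delta> then m else 0) *\<^sub>R d) = of_int m *\<^sub>R \<delta>"
proof -
  have "(\<Sum>d\<in>\<Delta>. of_int (if d = \<delta> then m else 0) *\<^sub>R d) = (\<Sum>d\<in>\<Delta>. if d = \<delta> then of_int m *\<^sub>R d else 0)"
    by (rule sum.cong) simp_all
  also have "\<dots> = of_int m *\<^sub>R \<delta>"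
    using assms finite_base by simp
  finally show ?thesis .
qed

lemma nonneg_comb_base: "\<delta> \<in> \<Delta> \<Longrightarrow> nonneg_comb \<delta>"
  unfolding nonneg_comb_def
  by (rule exI[of _ "\<lambda>d. if d = \<delta> then 1 else 0"]) (simp add: sum_base_single)

lemma nonneg_comb_add_scale:
  assumes "nonneg_comb x" "nonneg_comb y" "m \<ge> 0"
  shows "nonneg_comb (x + of_int m *\<^sub>R y)"
proof -
  obtain c d where c: "x = (\<Sum>\<delta>\<in>\<Delta>. of_int (c \<delta>) *\<^sub>R \<delta>)" "\<forall>\<delta>\<in>\<Delta>. c \<delta> \<ge> 0"
    and d: "y = (\<Sum>\<delta>\<in>\<Delta>. of_int (d \<delta>) *\<^sub>R \<delta>)" "\<forall>\<delta>\<in>\<Delta>. d \<delta> \<ge> 0"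
    using assms(1,2) unfolding nonneg_comb_def by blast
  have "x + of_int m *\<^sub>R y = (\<Sum>\<delta>\<in>\<Delta>. of_int (c \<delta> + m * d \<delta>) *\<^sub>R \<delta>)"
    unfolding c(1) d(1) scaleR_sum_right sum.distrib[symmetric]
    by (rule sum.cong) (simp_all add: scaleR_add_left)
  moreover have "\<forall>\<delta>\<in>\<Delta>. c \<delta> + m * d \<delta> \<ge> 0"
    using c(2) d(2) assms(3) by simp
  ultimately show ?thesis
    unfolding nonneg_comb_def by (intro exI[of _ "\<lambda>\<delta>. c \<delta> + m * d \<delta>"] conjI)
qed

lemma sum_base_add:
  "(\<Sum>\<delta>\<in>\<Delta>. of_int (c \<delta> + d \<delta>) *\<^sub>R \<delta>) = (\<Sum>\<delta>\<in>\<Delta>. of_int (c \<delta>) *\<^sub>R \<delta>) + (\<Sum>\<delta>\<in>\<Delta>. of_int (d \<delta>) *\<^sub>R (\<delta>::'a))"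
  unfolding sum.distrib[symmetric] by (rule sum.cong) (simp_all add: scaleR_add_left)

lemma nonneg_comb_antisym:
  assumes "nonneg_comb x" "nonneg_comb (- x)"
  shows "x = 0"
proof -
  obtain c d where c: "x = (\<Sum>\<delta>\<in>\<Delta>. of_int (c \<delta>) *\<^sub>R \<delta>)" "\<forall>\<delta>\<in>\<Delta>. c \<delta> \<ge> 0"
    and d: "- x = (\<Sum>\<delta>\<in>\<Delta>. of_int (d \<delta>) *\<^sub>R \<delta>)" "\<forall>\<delta>\<in>\<Delta>. d \<delta> \<ge> 0"
    using assms unfolding nonneg_comb_def by blast
  have "(\<Sum>\<delta>\<in>\<Delta>. of_int (c \<delta> + d \<delta>) *\<^sub>R \<delta>) = (\<Sum>\<delta>\<in>\<Delta>. of_int 0 *\<^sub>R \<delta>)"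
    unfolding sum_base_add c(1)[symmetric] d(1)[symmetric] by simp
  then have "c \<delta> + d \<delta> = 0" if "\<delta> \<in> \<Delta>" for \<delta>
    using base_coeff_unique[of "\<lambda>\<delta>. c \<delta> + d \<delta>" "\<lambda>_. 0"] that by simp
  then have "\<forall>\<delta>\<in>\<Delta>. c \<delta> = 0"
    using c(2) d(2) by (metis add_nonneg_eq_0_iff)
  then show ?thesis
    using c(1) by simp
qed

lemma nonneg_comb_below_multiple:
  assumes x: "x = (\<Sum>\<delta>\<in>\<Delta>. of_int (c \<delta>) *\<^sub>R \<delta>)" "\<forall>\<delta>\<in>\<Delta>. c \<delta> \<ge> 0"
    and "nonneg_comb (of_int m *\<^sub>R \<delta> - x)" "\<delta> \<in> \<Delta>"
  shows "x = of_int (c \<delta>) *\<^sub>R \<delta>"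
proof -
  obtain d where d: "of_int m *\<^sub>R \<delta> - x = (\<Sum>\<delta>\<in>\<Delta>. of_int (d \<delta>) *\<^sub>R \<delta>)" "\<forall>\<delta>\<in>\<Delta>. d \<delta> \<ge> 0"
    using assms(3) unfolding nonneg_comb_def by blast
  have "(\<Sum>d'\<in>\<Delta>. of_int (c d' + d d') *\<^sub>R d') = (\<Sum>d'\<in>\<Delta>. of_int (if d' = \<delta> then m else 0) *\<^sub>R d')"
    unfolding sum_base_add sum_base_single[OF assms(4)] x(1)[symmetric] d(1)[symmetric] by simp
  then have "c d' + d d' = 0" if "d' \<in> \<Delta>" "d' \<noteq> \<delta>" for d'
    using base_coeff_unique[of "\<lambda>d'. c d' + d d'" "\<lambda>d'. if d' = \<delta> then m else 0"] that by simp
  then have "\<forall>d'\<in>\<Delta>. d' \<noteq> \<delta> \<longrightarrow> c d' = 0"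
    using x(2) d(2) by (metis add_nonneg_eq_0_iff)
  then have "x = (\<Sum>d'\<in>\<Delta>. of_int (if d' = \<delta> then c \<delta> else 0) *\<^sub>R d')"
    unfolding x(1) by (intro sum.cong) auto
  then show ?thesis
    using sum_base_single[OF assms(4)] by simp
qed

lemma pos_root_not_neg: "x \<in> Pos \<Longrightarrow> x \<notin> Neg"
  using nonneg_comb_antisym zero_notin_roots
  unfolding neg_roots_iff pos_roots_eq by auto

lemma root_pos_or_neg:
  assumes "x \<in> \<Phi>"
  shows "x \<in> Pos \<or> x \<in> Neg"
proof -
  obtain c where c: "x = (\<Sum>\<delta>\<in>\<Delta>. of_int (c \<delta>) *\<^sub>R \<delta>)"
    "(\<forall>\<delta>\<in>\<Delta>. c \<delta> \<ge> 0) \<or> (\<forall>\<delta>\<in>\<Delta>. c \<delta> \<le> 0)"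
    using root_base_expansion[OF assms] by blast
  have "- x = (\<Sum>\<delta>\<in>\<Delta>. of_int (- c \<delta>) *\<^sub>R \<delta>)"
    using c(1) by (simp add: sum_negf)
  then have "nonneg_comb x \<or> nonneg_comb (- x)"
    using c unfolding nonneg_comb_def
    by (metis neg_0_le_iff_le)
  then show ?thesis
    using assms uminus_root unfolding neg_roots_iff pos_roots_eq by blast
qed

lemma base_pos_root: "\<delta> \<in> \<Delta> \<Longrightarrow> \<delta> \<in> Pos"
  using nonneg_comb_base base_subset_roots unfolding pos_roots_eq by auto

lemma pos_root_add_multiple:
  assumes "x \<in> Pos" "y \<in> Pos" "m \<ge> 0" "x + of_int m *\<^sub>R y \<in> \<Phi>"
  shows "x + of_int m *\<^sub>R y \<in> Pos"
  using assms nonneg_comb_add_scale unfolding pos_roots_eq by auto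

lemma simple_refl_pos_root:
  assumes "\<delta> \<in> \<Delta>" "\<beta> \<in> Pos" "\<beta> \<noteq> \<delta>"
  shows "rs_refl \<delta> \<beta> \<in> Pos"
proof (rule ccontr)
  assume "rs_refl \<delta> \<beta> \<notin> Pos"
  have \<delta>: "\<delta> \<in> \<Phi>" and \<beta>: "\<beta> \<in> \<Phi>"
    using assms base_subset_roots pos_roots_subset by blast+
  obtain m :: int where m: "rs_refl \<delta> \<beta> = \<beta> - of_int m *\<^sub>R \<delta>"
    using rs_refl_root_eq[OF \<delta> \<beta>] by blast
  have "- rs_refl \<delta> \<beta> \<in> Pos"
    using \<open>rs_refl \<delta> \<beta> \<notin> Pos\<close> root_pos_or_neg rs_refl_root[OF \<delta> \<beta>] neg_roots_iff by blast
  then have "nonneg_comb (of_int m *\<^sub>R \<delta> - \<beta>)"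
    unfolding m pos_roots_eq by simp
  moreover obtain c where c: "\<beta> = (\<Sum>\<delta>\<in>\<Delta>. of_int (c \<delta>) *\<^sub>R \<delta>)" "\<forall>\<delta>\<in>\<Delta>. c \<delta> \<ge> 0"
    using assms(2) unfolding pos_roots_eq nonneg_comb_def by blast
  ultimately have "\<beta> = of_int (c \<delta>) *\<^sub>R \<delta>"
    using nonneg_comb_below_multiple assms(1) by blast
  then have "\<beta> = \<delta> \<or> \<beta> = - \<delta>"
    using root_multiple[OF \<delta>, of "of_int (c \<delta>)"] \<beta> by auto
  then show False
    using assms base_pos_root pos_root_not_neg neg_roots_iff by auto
qed

section \<open>The Weyl group and the length function\<close>

abbreviation W where "W \<equiv> weyl_group \<Phi>"

lemma weyl_orthogonal_transformation: "u \<in> W \<Longrightarrow> orthogonal_transformation u"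
proof (induction rule: weyl_group.induct)
  case weyl_id
  show ?case
    by (simp add: id_def)
next
  case (weyl_step \<alpha> w)
  show ?case
    by (rule orthogonal_transformation_compose[OF orthogonal_transformation_rs_refl weyl_step.IH])
qed

lemma weyl_linear: "u \<in> W \<Longrightarrow> linear u"
  using weyl_orthogonal_transformation orthogonal_transformation_linear by blast

lemma weyl_bij: "u \<in> W \<Longrightarrow> bij u"
  using weyl_orthogonal_transformation orthogonal_transformation_bij by blast

lemma weyl_image_roots: "u \<in> W \<Longrightarrow> u ` \<Phi> = \<Phi>"
proof (induction rule: weyl_group.induct)
  case (weyl_step \<alpha> w)
  have "(rs_refl \<alpha> \<circ> w) ` \<Phi> = rs_refl \<alpha> ` (w ` \<Phi>)"
    by (simp only: image_comp)
  then show ?case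
    using weyl_step root_system unfolding crystallographic_root_system_def by simp
qed simp

lemma weyl_root: "u \<in> W \<Longrightarrow> x \<in> \<Phi> \<Longrightarrow> u x \<in> \<Phi>"
  using weyl_image_roots by blast

lemma weyl_comp_rs_refl: "u \<in> W \<Longrightarrow> \<alpha> \<in> \<Phi> \<Longrightarrow> u \<circ> rs_refl \<alpha> \<in> W"
proof (induction rule: weyl_group.induct)
  case weyl_id
  then show ?case
    using weyl_group.weyl_step[OF weyl_id.prems weyl_group.weyl_id] by simp
next
  case (weyl_step \<beta> w)
  then show ?case
    using weyl_group.weyl_step[OF weyl_step.hyps(1) weyl_step.IH] by (simp only: o_assoc)
qed

lemma inv_rs_refl_comp:
  assumes "\<alpha> \<in> \<Phi>" "w \<in> W"
  shows "inv (rs_refl \<alpha> \<circ> w) = inv w \<circ> rs_refl \<alpha>"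
  using o_inv_distrib[OF orthogonal_transformation_bij[OF orthogonal_transformation_rs_refl] weyl_bij[OF assms(2)]]
    inv_rs_refl[OF root_nonzero[OF assms(1)]] by simp

lemma weyl_inv: "u \<in> W \<Longrightarrow> inv u \<in> W"
proof (induction rule: weyl_group.induct)
  case weyl_id
  show ?case
    unfolding inv_id by (rule weyl_group.weyl_id)
next
  case (weyl_step \<alpha> w)
  then show ?case
    using weyl_comp_rs_refl[OF weyl_step.IH weyl_step.hyps(1)] inv_rs_refl_comp by (simp only:)
qed

lemma refl_word_weyl: "set xs \<subseteq> \<Delta> \<Longrightarrow> refl_word xs \<in> W"
  by (induction xs) (use base_subset_roots in \<open>auto intro: weyl_group.intros\<close>)

definition inversions :: "('a \<Rightarrow> 'a) \<Rightarrow> 'a set" where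
  "inversions u = {\<gamma> \<in> Pos. u \<gamma> \<in> Neg}"

lemma inv_set_eq_inversions: "inv_set \<Phi> \<Delta> u = inversions (inv u)"
  unfolding inv_set_def inversions_def ..

lemma finite_inversions: "finite (inversions u)"
  unfolding inversions_def using finite_pos_roots by simp

lemma inversions_id: "inversions id = {}"
  unfolding inversions_def using pos_root_not_neg by auto

lemma card_inversions_comp_simple_le:
  assumes "\<delta> \<in> \<Delta>"
  shows "card (inversions (u \<circ> rs_refl \<delta>)) \<le> card (inversions u) + 1"
proof -
  have "inversions (u \<circ> rs_refl \<delta>) \<subseteq> insert \<delta> (rs_refl \<delta> ` inversions u)"
  proof
    fix \<gamma> assume \<gamma>: "\<gamma> \<in> inversions (u \<circ> rs_refl \<delta>)"
    show "\<gamma> \<in> insert \<delta> (rs_refl \<delta> ` inversions u)"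
    proof (cases "\<gamma> = \<delta>")
      case False
      then have "rs_refl \<delta> \<gamma> \<in> inversions u"
        using simple_refl_pos_root[OF assms] \<gamma> unfolding inversions_def by simp
      then show ?thesis
        using rs_refl_rs_refl[OF base_nonzero[OF assms]] by (metis image_eqI insertI2)
    qed simp
  qed
  then have "card (inversions (u \<circ> rs_refl \<delta>)) \<le> card (insert \<delta> (rs_refl \<delta> ` inversions u))"
    by (intro card_mono) (simp_all add: finite_inversions)
  also have "\<dots> \<le> card (rs_refl \<delta> ` inversions u) + 1"
    by (simp add: card_insert_if finite_inversions)
  also have "\<dots> \<le> card (inversions u) + 1"
    using card_image_le[OF finite_inversions] by simp
  finally show ?thesis .
qed

lemma card_inversions_comp_simple_ge:
  assumes "u \<in> W" "\<delta> \<in> \<Delta>" "u \<delta> \<in> Pos"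
  shows "card (inversions u) + 1 \<le> card (inversions (u \<circ> rs_refl \<delta>))"
proof -
  have \<delta>: "\<delta> \<noteq> 0" "\<delta> \<in> Pos"
    using assms(2) base_nonzero base_pos_root by auto
  have "u (rs_refl \<delta> \<delta>) = - u \<delta>"
    using rs_refl_self[OF \<delta>(1)] linear_neg[OF weyl_linear[OF assms(1)]] by simp
  then have "\<delta> \<in> inversions (u \<circ> rs_refl \<delta>)"
    using \<delta>(2) assms(3) unfolding inversions_def by (simp add: neg_roots_iff)
  moreover have "rs_refl \<delta> ` inversions u \<subseteq> inversions (u \<circ> rs_refl \<delta>)"
  proof
    fix x assume "x \<in> rs_refl \<delta> ` inversions u"
    then obtain \<gamma> where \<gamma>: "\<gamma> \<in> inversions u" "x = rs_refl \<delta> \<gamma>" by blast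
    have "\<gamma> \<noteq> \<delta>"
      using \<gamma>(1) assms(3) pos_root_not_neg unfolding inversions_def by blast
    then show "x \<in> inversions (u \<circ> rs_refl \<delta>)"
      using simple_refl_pos_root[OF assms(2)] \<gamma> \<delta>(1) unfolding inversions_def by simp
  qed
  moreover have "\<delta> \<notin> rs_refl \<delta> ` inversions u"
  proof
    assume "\<delta> \<in> rs_refl \<delta> ` inversions u"
    then obtain \<gamma> where \<gamma>: "\<gamma> \<in> inversions u" "rs_refl \<delta> \<gamma> = \<delta>" by auto
    have "\<gamma> = - \<delta>"
      using arg_cong[OF \<gamma>(2), of "rs_refl \<delta>"] rs_refl_self[OF \<delta>(1)] \<delta>(1) by simp
    then have "- \<delta> \<in> Pos"
      using \<gamma>(1) unfolding inversions_def by simp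
    then show False
      using \<delta>(2) pos_root_not_neg neg_roots_iff by blast
  qed
  moreover have "card (rs_refl \<delta> ` inversions u) = card (inversions u)"
    using orthogonal_transformation_inj[OF orthogonal_transformation_rs_refl]
    by (meson card_image inj_on_subset subset_UNIV)
  ultimately have "card (insert \<delta> (rs_refl \<delta> ` inversions u)) = card (inversions u) + 1"
    by (simp add: finite_inversions)
  moreover have "card (insert \<delta> (rs_refl \<delta> ` inversions u)) \<le> card (inversions (u \<circ> rs_refl \<delta>))"
    using \<open>\<delta> \<in> inversions (u \<circ> rs_refl \<delta>)\<close> \<open>rs_refl \<delta> ` inversions u \<subseteq> inversions (u \<circ> rs_refl \<delta>)\<close>
    by (intro card_mono finite_inversions) blast
  ultimately show ?thesis
    by simp
qed

lemma refl_word_deletion: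
  "set xs \<subseteq> \<Delta> \<Longrightarrow> \<delta> \<in> \<Delta> \<Longrightarrow> refl_word xs \<delta> \<in> Neg \<Longrightarrow>
   \<exists>ys. set ys \<subseteq> \<Delta> \<and> length ys + 1 = length xs \<and> refl_word xs \<circ> rs_refl \<delta> = refl_word ys"
proof (induction xs)
  case Nil
  then show ?case
    using base_pos_root pos_root_not_neg by auto
next
  case (Cons a xs)
  let ?u = "refl_word xs"
  have xs: "set xs \<subseteq> \<Delta>" and a: "a \<in> \<Delta>"
    using Cons.prems by auto
  have u: "?u \<in> W"
    using refl_word_weyl[OF xs] .
  show ?case
  proof (cases "?u \<delta> \<in> Neg")
    case True
    then obtain ys where ys: "set ys \<subseteq> \<Delta>" "length ys + 1 = length xs" "?u \<circ> rs_refl \<delta> = refl_word ys"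
      using Cons.IH[OF xs Cons.prems(2)] by blast
    have "refl_word (a # xs) \<circ> rs_refl \<delta> = refl_word (a # ys)"
      unfolding refl_word_Cons comp_assoc ys(3) ..
    moreover have "set (a # ys) \<subseteq> \<Delta>" "length (a # ys) + 1 = length (a # xs)"
      using ys a by auto
    ultimately show ?thesis
      by blast
  next
    case False
    then have "?u \<delta> \<in> Pos"
      using root_pos_or_neg weyl_root[OF u] Cons.prems(2) base_subset_roots by blast
    moreover have "rs_refl a (?u \<delta>) \<in> Neg"
      using Cons.prems(3) by simp
    ultimately have "?u \<delta> = a"
      using simple_refl_pos_root[OF a] pos_root_not_neg by blast
    then have "rs_refl a \<circ> ?u = ?u \<circ> rs_refl \<delta>"
      using rs_refl_conj[OF weyl_orthogonal_transformation[OF u], of \<delta>] by (simp add: fun_eq_iff)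
    then have "refl_word (a # xs) \<circ> rs_refl \<delta> = ?u"
      using rs_refl_rs_refl[OF base_nonzero[OF a]] by (simp add: fun_eq_iff) (metis comp_apply)
    moreover have "length xs + 1 = length (a # xs)"
      by simp
    ultimately show ?thesis
      using xs by blast
  qed
qed

lemma card_inversions_refl_word_le: "set xs \<subseteq> \<Delta> \<Longrightarrow> card (inversions (refl_word xs)) \<le> length xs"
proof (induction xs rule: rev_induct)
  case (snoc x xs)
  then have "card (inversions (refl_word xs)) \<le> length xs" "x \<in> \<Delta>"
    by auto
  moreover have "card (inversions (refl_word (xs @ [x]))) \<le> card (inversions (refl_word xs)) + 1"
    unfolding refl_word_snoc by (rule card_inversions_comp_simple_le) fact
  ultimately show ?case
    by simp
qed (simp add: inversions_id)

definition reduced_word :: "'a list \<Rightarrow> bool" where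
  "reduced_word xs \<longleftrightarrow> set xs \<subseteq> \<Delta> \<and>
     (\<forall>ys. set ys \<subseteq> \<Delta> \<longrightarrow> refl_word ys = refl_word xs \<longrightarrow> length xs \<le> length ys)"

lemma reduced_word_snocD: "reduced_word (xs @ [x]) \<Longrightarrow> reduced_word xs"
  unfolding reduced_word_def
proof (elim conjE, intro conjI allI impI)
  fix ys
  assume "set (xs @ [x]) \<subseteq> \<Delta>" and min: "\<forall>ys. set ys \<subseteq> \<Delta> \<longrightarrow> refl_word ys = refl_word (xs @ [x]) \<longrightarrow>
      length (xs @ [x]) \<le> length ys"
    and "set ys \<subseteq> \<Delta>" "refl_word ys = refl_word xs"
  then show "length xs \<le> length ys"
    using min[rule_format, of "ys @ [x]"] by (simp add: refl_word_snoc)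
qed simp

lemma length_le_card_inversions: "reduced_word xs \<Longrightarrow> length xs \<le> card (inversions (refl_word xs))"
proof (induction xs rule: rev_induct)
  case (snoc x xs)
  have xs: "set xs \<subseteq> \<Delta>" and x: "x \<in> \<Delta>"
    using snoc.prems unfolding reduced_word_def by auto
  have IH: "length xs \<le> card (inversions (refl_word xs))"
    using snoc.IH[OF reduced_word_snocD[OF snoc.prems]] .
  have u: "refl_word xs \<in> W"
    using refl_word_weyl[OF xs] .
  show ?case
  proof (cases "refl_word xs x \<in> Pos")
    case True
    then show ?thesis
      using card_inversions_comp_simple_ge[OF u x True] IH unfolding refl_word_snoc length_append_singleton
      by linarith
  next
    case False
    then have "refl_word xs x \<in> Neg"
      using root_pos_or_neg weyl_root[OF u] x base_subset_roots by blast
    then obtain ys where ys: "set ys \<subseteq> \<Delta>" "length ys + 1 = length xs" "refl_word xs \<circ> rs_refl x = refl_word ys"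
      using refl_word_deletion[OF xs x] by blast
    then have "length (xs @ [x]) \<le> length ys"
      using snoc.prems unfolding reduced_word_def by (simp add: refl_word_snoc)
    then show ?thesis
      using ys(2) by simp
  qed
qed simp

lemma pos_root_inner_base:
  assumes "\<beta> \<in> Pos"
  obtains \<delta> where "\<delta> \<in> \<Delta>" "0 < \<beta> \<bullet> \<delta>"
proof -
  obtain c where c: "\<beta> = (\<Sum>\<delta>\<in>\<Delta>. of_int (c \<delta>) *\<^sub>R \<delta>)" "\<forall>\<delta>\<in>\<Delta>. c \<delta> \<ge> 0"
    using assms unfolding pos_roots_eq nonneg_comb_def by blast
  have "\<beta> \<bullet> \<beta> = (\<Sum>\<delta>\<in>\<Delta>. of_int (c \<delta>) * (\<beta> \<bullet> \<delta>))"
    by (subst (2) c(1)) (simp add: inner_sum_right)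
  moreover have "0 < \<beta> \<bullet> \<beta>"
    using assms pos_roots_subset root_nonzero by auto
  moreover have "(\<Sum>\<delta>\<in>\<Delta>. of_int (c \<delta>) * (\<beta> \<bullet> \<delta>)) \<le> 0" if "\<forall>\<delta>\<in>\<Delta>. \<beta> \<bullet> \<delta> \<le> 0"
    using that c(2) by (intro sum_nonpos) (simp add: mult_nonneg_nonpos)
  ultimately show thesis
    using that by force
qed

lemma simple_refl_lowers_pos_root:
  assumes "\<beta> \<in> Pos" "\<beta> \<notin> \<Delta>"
  obtains \<delta> m where "\<delta> \<in> \<Delta>" "(1::int) \<le> m" "rs_refl \<delta> \<beta> = \<beta> - of_int m *\<^sub>R \<delta>" "rs_refl \<delta> \<beta> \<in> Pos"
proof -
  obtain \<delta> where \<delta>: "\<delta> \<in> \<Delta>" "0 < \<beta> \<bullet> \<delta>"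
    using pos_root_inner_base[OF assms(1)] .
  have "\<delta> \<in> \<Phi>" "\<beta> \<in> \<Phi>"
    using \<delta>(1) assms(1) base_subset_roots pos_roots_subset by blast+
  then obtain m where m: "of_int m = 2 * (\<beta> \<bullet> \<delta>) / (\<delta> \<bullet> \<delta>)" "rs_refl \<delta> \<beta> = \<beta> - of_int m *\<^sub>R \<delta>"
    by (rule rs_refl_root_eq)
  have "0 < (of_int m :: real)"
    using m(1) \<delta>(2) base_nonzero[OF \<delta>(1)] by simp
  then have "1 \<le> m"
    by simp
  moreover have "rs_refl \<delta> \<beta> \<in> Pos"
    using simple_refl_pos_root[OF \<delta>(1) assms(1)] assms(2) \<delta>(1) by blast
  ultimately show thesis
    using that \<delta>(1) m(2) by blast
qed

lemma height_functional:
  obtains ht :: "'a \<Rightarrow> real" where "linear ht" "\<forall>\<delta>\<in>\<Delta>. ht \<delta> = 1" "\<forall>\<gamma>\<in>Pos. 0 \<le> ht \<gamma>"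
proof -
  obtain ht :: "'a \<Rightarrow> real" where ht: "linear ht" "\<forall>\<delta>\<in>\<Delta>. ht \<delta> = 1"
    using linear_independent_extend[OF independent_base, of "\<lambda>_. 1"] by blast
  have "0 \<le> ht \<gamma>" if \<gamma>: "\<gamma> \<in> Pos" for \<gamma>
  proof -
    obtain c where c: "\<gamma> = (\<Sum>\<delta>\<in>\<Delta>. of_int (c \<delta>) *\<^sub>R \<delta>)" "\<forall>\<delta>\<in>\<Delta>. c \<delta> \<ge> 0"
      using \<gamma> unfolding pos_roots_eq nonneg_comb_def by blast
    then have "ht \<gamma> = (\<Sum>\<delta>\<in>\<Delta>. of_int (c \<delta>))"
      using ht by (simp add: linear_sum linear_scale)
    then show ?thesis
      using c(2) by (simp add: sum_nonneg)
  qed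
  then show thesis
    using that ht by blast
qed

lemma rs_refl_pos_root_word:
  assumes "\<beta> \<in> Pos"
  shows "\<exists>xs. set xs \<subseteq> \<Delta> \<and> rs_refl \<beta> = refl_word xs"
proof -
  obtain ht :: "'a \<Rightarrow> real" where ht: "linear ht" "\<forall>\<delta>\<in>\<Delta>. ht \<delta> = 1" "\<forall>\<gamma>\<in>Pos. 0 \<le> ht \<gamma>"
    by (rule height_functional)
  have "\<forall>\<beta>\<in>Pos. ht \<beta> < real n \<longrightarrow> (\<exists>xs. set xs \<subseteq> \<Delta> \<and> rs_refl \<beta> = refl_word xs)" for n
  proof (induction n)
    case 0
    then show ?case
      using ht(3) by force
  next
    case (Suc n)
    show ?case
    proof (intro ballI impI)
      fix \<beta> assume \<beta>: "\<beta> \<in> Pos" "ht \<beta> < real (Suc n)"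
      show "\<exists>xs. set xs \<subseteq> \<Delta> \<and> rs_refl \<beta> = refl_word xs"
      proof (cases "\<beta> \<in> \<Delta>")
        case True
        then show ?thesis
          by (intro exI[of _ "[\<beta>]"]) simp
      next
        case False
        then obtain \<delta> m where \<delta>m: "\<delta> \<in> \<Delta>" "(1::int) \<le> m"
          "rs_refl \<delta> \<beta> = \<beta> - of_int m *\<^sub>R \<delta>" "rs_refl \<delta> \<beta> \<in> Pos"
          using simple_refl_lowers_pos_root[OF \<beta>(1)] by blast
        have "ht (rs_refl \<delta> \<beta>) = ht \<beta> - of_int m"
          using \<delta>m(1,3) ht by (simp add: linear_diff linear_scale)
        then have "ht (rs_refl \<delta> \<beta>) < real n"
          using \<beta>(2) \<delta>m(2) by simp
        then obtain ys where ys: "set ys \<subseteq> \<Delta>" "rs_refl (rs_refl \<delta> \<beta>) = refl_word ys"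
          using Suc.IH \<delta>m(4) by blast
        have "rs_refl \<beta> = refl_word (\<delta> # ys @ [\<delta>])"
          unfolding refl_word_Cons refl_word_snoc ys(2)[symmetric]
          by (rule rs_refl_conj_rs_refl[OF base_nonzero[OF \<delta>m(1)]])
        moreover have "set (\<delta> # ys @ [\<delta>]) \<subseteq> \<Delta>"
          using ys(1) \<delta>m(1) by simp
        ultimately show ?thesis
          by blast
      qed
    qed
  qed
  then show ?thesis
    using assms reals_Archimedean2[of "ht \<beta>"] by blast
qed

lemma rs_refl_root_word: "\<beta> \<in> \<Phi> \<Longrightarrow> \<exists>xs. set xs \<subseteq> \<Delta> \<and> rs_refl \<beta> = refl_word xs"
  using root_pos_or_neg rs_refl_pos_root_word rs_refl_uminus neg_roots_iff by metis

lemma weyl_refl_word: "u \<in> W \<Longrightarrow> \<exists>xs. set xs \<subseteq> \<Delta> \<and> u = refl_word xs"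
proof (induction rule: weyl_group.induct)
  case weyl_id
  show ?case
    by (intro exI[of _ "[]"]) simp
next
  case (weyl_step \<alpha> w)
  obtain xs ys where xs: "set xs \<subseteq> \<Delta>" "rs_refl \<alpha> = refl_word xs" and ys: "set ys \<subseteq> \<Delta>" "w = refl_word ys"
    using rs_refl_root_word[OF weyl_step.hyps(1)] weyl_step.IH by blast
  have "rs_refl \<alpha> \<circ> w = refl_word (xs @ ys)"
    unfolding refl_word_append xs(2) ys(2) ..
  moreover have "set (xs @ ys) \<subseteq> \<Delta>"
    using xs(1) ys(1) by simp
  ultimately show ?case
    by blast
qed

lemma weyl_length_eq_card_inversions:
  assumes "u \<in> W"
  shows "weyl_length \<Delta> u = card (inversions u)"
proof -
  let ?word = "\<lambda>k. \<exists>xs. length xs = k \<and> set xs \<subseteq> \<Delta> \<and> u = refl_word xs"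
  have len: "weyl_length \<Delta> u = (LEAST k. ?word k)"
    unfolding weyl_length_def refl_word_def ..
  have "\<exists>k. ?word k"
    using weyl_refl_word[OF assms] by blast
  then obtain xs where xs: "length xs = weyl_length \<Delta> u" "set xs \<subseteq> \<Delta>" "u = refl_word xs"
    using LeastI_ex[of ?word] unfolding len by blast
  have "reduced_word xs"
    unfolding reduced_word_def
  proof (intro conjI allI impI)
    fix ys assume "set ys \<subseteq> \<Delta>" "refl_word ys = refl_word xs"
    then have "weyl_length \<Delta> u \<le> length ys"
      unfolding len using xs(3) by (intro Least_le) auto
    then show "length xs \<le> length ys"
      using xs(1) by simp
  qed fact
  then show ?thesis
    using length_le_card_inversions card_inversions_refl_word_le xs by (metis le_antisym)
qed

lemma card_inversions_inv:
  assumes "u \<in> W"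
  shows "card (inversions (inv u)) = card (inversions u)"
proof -
  have b: "bij u" and lin: "linear u"
    using weyl_bij weyl_linear assms by blast+
  have "inversions (inv u) = (\<lambda>\<gamma>. - u \<gamma>) ` inversions u"
  proof (intro set_eqI iffI)
    fix \<beta> assume \<beta>: "\<beta> \<in> inversions (inv u)"
    have "u (- inv u \<beta>) = - \<beta>"
      using linear_neg[OF lin] bij_inv_eq_iff[OF b] by metis
    then show "\<beta> \<in> (\<lambda>\<gamma>. - u \<gamma>) ` inversions u"
      using \<beta> unfolding inversions_def neg_roots_iff by (intro image_eqI[of _ _ "- inv u \<beta>"]) auto
  next
    fix \<beta> assume "\<beta> \<in> (\<lambda>\<gamma>. - u \<gamma>) ` inversions u"
    then obtain \<gamma> where \<gamma>: "\<gamma> \<in> inversions u" "\<beta> = - u \<gamma>"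
      by blast
    then have "inv u \<beta> = - \<gamma>"
      using linear_neg[OF lin] bij_inv_eq_iff[OF b] by metis
    then show "\<beta> \<in> inversions (inv u)"
      using \<gamma> unfolding inversions_def neg_roots_iff by simp
  qed
  moreover have "inj_on (\<lambda>\<gamma>. - u \<gamma>) (inversions u)"
    using bij_is_inj[OF b] unfolding inj_on_def by auto
  ultimately show ?thesis
    by (simp add: card_image)
qed

lemma weyl_length_eq_card_inv_set: "u \<in> W \<Longrightarrow> weyl_length \<Delta> u = card (inv_set \<Phi> \<Delta> u)"
  using weyl_length_eq_card_inversions card_inversions_inv inv_set_eq_inversions by simp

section \<open>Folding by a reflection\<close>

lemma rs_refl_pos_to_neg:
  assumes "\<alpha> \<in> Pos" "\<beta> \<in> Pos" "rs_refl \<alpha> \<beta> \<in> Neg"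
  obtains m :: int where "1 \<le> m" "rs_refl \<alpha> \<beta> = \<beta> - of_int m *\<^sub>R \<alpha>"
proof -
  have \<alpha>: "\<alpha> \<in> \<Phi>" and \<beta>: "\<beta> \<in> \<Phi>"
    using assms pos_roots_subset by blast+
  obtain m where m: "rs_refl \<alpha> \<beta> = \<beta> - of_int m *\<^sub>R \<alpha>"
    using rs_refl_root_eq[OF \<alpha> \<beta>] by blast
  have "1 \<le> m"
  proof (rule ccontr)
    assume "\<not> 1 \<le> m"
    then have "rs_refl \<alpha> \<beta> = \<beta> + of_int (- m) *\<^sub>R \<alpha>" "0 \<le> - m"
      using m by simp_all
    then have "rs_refl \<alpha> \<beta> \<in> Pos"
      using pos_root_add_multiple[OF assms(2,1), of "- m"] rs_refl_root[OF \<alpha> \<beta>] by simp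
    then show False
      using assms(3) pos_root_not_neg by blast
  qed
  then show thesis
    using that m by blast
qed

definition fold_refl :: "'a \<Rightarrow> 'a \<Rightarrow> 'a" where
  "fold_refl \<alpha> \<gamma> = (if rs_refl \<alpha> \<gamma> \<in> Pos then rs_refl \<alpha> \<gamma> else \<gamma>)"

lemma inj_on_fold_refl:
  assumes "\<alpha> \<noteq> 0"
  shows "inj_on (fold_refl \<alpha>) Pos"
proof
  fix x y assume x: "x \<in> Pos" and y: "y \<in> Pos" and eq: "fold_refl \<alpha> x = fold_refl \<alpha> y"
  have inv: "rs_refl \<alpha> (rs_refl \<alpha> z) = z" for z
    using assms by simp
  show "x = y"
  proof (cases "rs_refl \<alpha> x \<in> Pos"; cases "rs_refl \<alpha> y \<in> Pos")
    assume "rs_refl \<alpha> x \<in> Pos" "rs_refl \<alpha> y \<in> Pos"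
    then have "rs_refl \<alpha> x = rs_refl \<alpha> y"
      using eq unfolding fold_refl_def by simp
    then show ?thesis
      using inv by metis
  next
    assume "rs_refl \<alpha> x \<notin> Pos" "rs_refl \<alpha> y \<notin> Pos"
    then show ?thesis
      using eq unfolding fold_refl_def by simp
  next
    assume "rs_refl \<alpha> x \<in> Pos" "rs_refl \<alpha> y \<notin> Pos"
    moreover from this have "rs_refl \<alpha> x = y"
      using eq unfolding fold_refl_def by simp
    ultimately show ?thesis
      using x inv by metis
  next
    assume "rs_refl \<alpha> x \<notin> Pos" "rs_refl \<alpha> y \<in> Pos"
    moreover from this have "x = rs_refl \<alpha> y"
      using eq unfolding fold_refl_def by simp
    ultimately show ?thesis
      using y inv by metis
  qed
qed

lemma fold_refl_inversions:
  assumes a: "a \<in> W" and \<alpha>: "\<alpha> \<in> Pos" "a \<alpha> \<in> Pos" and \<gamma>: "\<gamma> \<in> inversions a"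
  shows "fold_refl \<alpha> \<gamma> \<in> inversions (a \<circ> rs_refl \<alpha>) - {\<alpha>}"
proof -
  have \<alpha>0: "\<alpha> \<noteq> 0" and \<alpha>\<Phi>: "\<alpha> \<in> \<Phi>"
    using \<alpha>(1) pos_roots_subset root_nonzero by blast+
  show ?thesis
  proof (cases "rs_refl \<alpha> \<gamma> \<in> Pos")
    case True
    have "rs_refl \<alpha> \<gamma> \<noteq> \<alpha>"
    proof
      assume eq: "rs_refl \<alpha> \<gamma> = \<alpha>"
      have "\<gamma> = - \<alpha>"
        using arg_cong[OF eq, of "rs_refl \<alpha>"] rs_refl_self[OF \<alpha>0] \<alpha>0 by simp
      then have "\<alpha> \<in> Neg"
        using \<gamma> unfolding inversions_def neg_roots_iff by simp
      then show False
        using \<alpha>(1) pos_root_not_neg by blast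
    qed
    then show ?thesis
      using True \<gamma> \<alpha>0 unfolding fold_refl_def inversions_def by simp
  next
    case False
    have lin: "linear a"
      using weyl_linear[OF a] .
    have \<gamma>\<Phi>: "\<gamma> \<in> \<Phi>"
      using \<gamma> pos_roots_subset unfolding inversions_def by blast
    then have "rs_refl \<alpha> \<gamma> \<in> Neg"
      using False root_pos_or_neg rs_refl_root[OF \<alpha>\<Phi>] by blast
    then obtain m where m: "1 \<le> m" "rs_refl \<alpha> \<gamma> = \<gamma> - of_int m *\<^sub>R \<alpha>"
      using rs_refl_pos_to_neg[OF \<alpha>(1)] \<gamma> unfolding inversions_def by blast
    have "- a (rs_refl \<alpha> \<gamma>) = - a \<gamma> + of_int m *\<^sub>R a \<alpha>"
      unfolding m(2) linear_diff[OF lin] linear_scale[OF lin] by simp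
    moreover have "- a (rs_refl \<alpha> \<gamma>) \<in> \<Phi>"
      using uminus_root weyl_root[OF a] rs_refl_root[OF \<alpha>\<Phi> \<gamma>\<Phi>] by blast
    ultimately have "- a (rs_refl \<alpha> \<gamma>) \<in> Pos"
      using pos_root_add_multiple[of "- a \<gamma>" "a \<alpha>" m] \<gamma> \<alpha>(2) m(1)
      unfolding inversions_def neg_roots_iff by simp
    moreover have "\<gamma> \<noteq> \<alpha>"
      using \<gamma> \<alpha>(2) pos_root_not_neg unfolding inversions_def by blast
    ultimately show ?thesis
      using False \<gamma> unfolding fold_refl_def inversions_def neg_roots_iff by simp
  qed
qed

text \<open>Consequently, when \<open>a s\<^sub>\<alpha>\<close> has only one inversion more than \<open>a\<close>, no root \<open>\<beta>\<close>
  as below exists.\<close>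
lemma card_inversions_comp_refl_ge:
  assumes a: "a \<in> W" and \<alpha>: "\<alpha> \<in> Pos" "a \<alpha> \<in> Pos"
    and \<beta>: "\<beta> \<in> Pos" "\<beta> \<noteq> \<alpha>" "rs_refl \<alpha> \<beta> \<in> Neg" "a \<beta> \<in> Pos" "a (rs_refl \<alpha> \<beta>) \<in> Neg"
  shows "card (inversions a) + 2 \<le> card (inversions (a \<circ> rs_refl \<alpha>))"
proof -
  have \<alpha>0: "\<alpha> \<noteq> 0"
    using \<alpha>(1) pos_roots_subset root_nonzero by blast
  have "fold_refl \<alpha> \<gamma> \<noteq> \<beta>" if \<gamma>: "\<gamma> \<in> inversions a" for \<gamma>
  proof
    assume eq: "fold_refl \<alpha> \<gamma> = \<beta>"
    show False
    proof (cases "rs_refl \<alpha> \<gamma> \<in> Pos")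
      case True
      then have s\<gamma>: "rs_refl \<alpha> \<gamma> = \<beta>"
        using eq unfolding fold_refl_def by simp
      have "rs_refl \<alpha> \<beta> = \<gamma>"
        using arg_cong[OF s\<gamma>, of "rs_refl \<alpha>"] \<alpha>0 by simp
      then show False
        using \<gamma> \<beta>(3) pos_root_not_neg unfolding inversions_def by blast
    next
      case False
      then show False
        using eq \<gamma> \<beta>(4) pos_root_not_neg unfolding fold_refl_def inversions_def by simp
    qed
  qed
  then have "fold_refl \<alpha> \<gamma> \<in> inversions (a \<circ> rs_refl \<alpha>) - {\<alpha>, \<beta>}" if "\<gamma> \<in> inversions a" for \<gamma>
    using fold_refl_inversions[OF a \<alpha> that] that by blast
  then have "fold_refl \<alpha> ` inversions a \<subseteq> inversions (a \<circ> rs_refl \<alpha>) - {\<alpha>, \<beta>}"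
    by (rule image_subsetI)
  moreover have "inj_on (fold_refl \<alpha>) (inversions a)"
    by (rule inj_on_subset[OF inj_on_fold_refl[OF \<alpha>0]]) (simp add: inversions_def)
  ultimately have "card (inversions a) \<le> card (inversions (a \<circ> rs_refl \<alpha>) - {\<alpha>, \<beta>})"
    by (intro card_inj_on_le) (simp_all add: finite_inversions)
  moreover have sub: "{\<alpha>, \<beta>} \<subseteq> inversions (a \<circ> rs_refl \<alpha>)"
    using \<alpha> \<beta> rs_refl_self[OF \<alpha>0] linear_neg[OF weyl_linear[OF a]]
    unfolding inversions_def neg_roots_iff by simp
  then have "card (inversions (a \<circ> rs_refl \<alpha>) - {\<alpha>, \<beta>}) = card (inversions (a \<circ> rs_refl \<alpha>)) - 2"
    using \<beta>(2) by (simp add: card_Diff_subset finite_inversions)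
  moreover have "2 \<le> card (inversions (a \<circ> rs_refl \<alpha>))"
    using card_mono[OF finite_inversions sub] \<beta>(2) by simp
  ultimately show ?thesis
    by linarith
qed

section \<open>Hessenberg inversion sets\<close>

definition hess_inversions :: "'a set \<Rightarrow> ('a \<Rightarrow> 'a) \<Rightarrow> 'a set" where
  "hess_inversions \<hh> u = {\<gamma> \<in> Pos. u \<gamma> \<in> uminus ` \<hh>}"

lemma hess_inv_set_eq_hess_inversions: "hess_inv_set \<Phi> \<Delta> \<hh> u = hess_inversions \<hh> (inv u)"
  unfolding hess_inv_set_def hess_inversions_def ..

lemma finite_hess_inversions: "finite (hess_inversions \<hh> u)"
  unfolding hess_inversions_def using finite_pos_roots by simp

lemma card_inv_set_le_hess_inv_set:
  assumes "v \<in> W"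
  shows "card (inv_set \<Phi> \<Delta> v) \<le> card (hess_inv_set \<Phi> \<Delta> \<hh> v) + card (Pos - \<hh>)"
proof -
  let ?N = "inv_set \<Phi> \<Delta> v" and ?H = "hess_inv_set \<Phi> \<Delta> \<hh> v"
  have "- inv v \<beta> \<in> Pos - \<hh>" if \<beta>: "\<beta> \<in> ?N - ?H" for \<beta>
  proof -
    have "- inv v \<beta> \<notin> \<hh>"
    proof
      assume "- inv v \<beta> \<in> \<hh>"
      then have "inv v \<beta> \<in> uminus ` \<hh>"
        by (metis image_eqI minus_minus)
      then show False
        using \<beta> unfolding inv_set_def hess_inv_set_def by blast
    qed
    then show ?thesis
      using \<beta> unfolding inv_set_def neg_roots_iff by blast
  qed
  then have "(\<lambda>\<beta>. - inv v \<beta>) ` (?N - ?H) \<subseteq> Pos - \<hh>"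
    by blast
  moreover have "inj_on (\<lambda>\<beta>. - inv v \<beta>) (?N - ?H)"
    using bij_is_inj[OF weyl_bij[OF weyl_inv[OF assms]]] unfolding inj_on_def inj_def by simp
  ultimately have "card (?N - ?H) \<le> card (Pos - \<hh>)"
    by (intro card_inj_on_le) (simp_all add: finite_pos_roots)
  moreover have "card (?N \<inter> ?H) \<le> card ?H"
    by (intro card_mono) (simp_all add: hess_inv_set_eq_hess_inversions finite_hess_inversions)
  moreover have "card ?N = card (?N \<inter> ?H) + card (?N - ?H)"
    by (rule card_Int_Diff) (simp add: inv_set_eq_inversions finite_inversions)
  ultimately show ?thesis
    by linarith
qed

lemma hessenberg_set_below:
  assumes "hessenberg_set \<Phi> \<Delta> \<hh>" "y \<in> \<hh>" "x \<in> Pos" "z \<in> Pos" "1 \<le> m" "y = x + of_int m *\<^sub>R z"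
  shows "x \<in> \<hh>"
proof (rule ccontr)
  assume "x \<notin> \<hh>"
  have "sum_list (replicate k z) = of_nat k *\<^sub>R z" for k
    by (induction k) (simp_all add: scaleR_add_left)
  then have "y - x = sum_list (replicate (nat m) z)"
    using assms(5,6) by simp
  then have "root_prec \<Phi> \<Delta> x y"
    unfolding root_prec_def using assms(4,5) by (intro exI[of _ "replicate (nat m) z"]) simp
  then have "y \<notin> \<hh>"
    using assms(1,3) \<open>x \<notin> \<hh>\<close> pos_roots_subset unfolding hessenberg_set_def by blast
  then show False
    using assms(2) by blast
qed

lemma fold_refl_hess_inversions:
  assumes \<hh>: "hessenberg_set \<Phi> \<Delta> \<hh>" and a: "a \<in> W" and \<alpha>: "\<alpha> \<in> Pos" "a \<alpha> \<in> Pos"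
    and cover: "card (inversions (a \<circ> rs_refl \<alpha>)) = card (inversions a) + 1"
    and \<beta>: "\<beta> \<in> hess_inversions \<hh> (a \<circ> rs_refl \<alpha>)" "\<beta> \<noteq> \<alpha>"
  shows "fold_refl \<alpha> \<beta> \<in> hess_inversions \<hh> a"
proof (cases "rs_refl \<alpha> \<beta> \<in> Pos")
  case True
  have "\<alpha> \<noteq> 0"
    using \<alpha>(1) pos_roots_subset root_nonzero by blast
  then show ?thesis
    using True \<beta>(1) unfolding fold_refl_def hess_inversions_def by simp
next
  case False
  have \<beta>_pos: "\<beta> \<in> Pos" and \<hh>_a_s\<beta>: "- a (rs_refl \<alpha> \<beta>) \<in> \<hh>"
    using \<beta>(1) unfolding hess_inversions_def by force+
  have \<alpha>\<Phi>: "\<alpha> \<in> \<Phi>" and \<beta>\<Phi>: "\<beta> \<in> \<Phi>"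
    using \<alpha>(1) \<beta>_pos pos_roots_subset by blast+
  have s\<beta>: "rs_refl \<alpha> \<beta> \<in> Neg"
    using False root_pos_or_neg rs_refl_root[OF \<alpha>\<Phi> \<beta>\<Phi>] by blast
  have "a (rs_refl \<alpha> \<beta>) \<in> Neg"
    using \<hh>_a_s\<beta> \<hh> unfolding hessenberg_set_def neg_roots_iff by blast
  then have "a \<beta> \<notin> Pos"
    using card_inversions_comp_refl_ge[OF a \<alpha> \<beta>_pos \<beta>(2) s\<beta>] cover by linarith
  then have "- a \<beta> \<in> Pos"
    using root_pos_or_neg weyl_root[OF a \<beta>\<Phi>] neg_roots_iff by blast
  moreover obtain m where m: "1 \<le> m" "rs_refl \<alpha> \<beta> = \<beta> - of_int m *\<^sub>R \<alpha>"
    using rs_refl_pos_to_neg[OF \<alpha>(1) \<beta>_pos s\<beta>] .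
  moreover have "- a (rs_refl \<alpha> \<beta>) = - a \<beta> + of_int m *\<^sub>R a \<alpha>"
    unfolding m(2) linear_diff[OF weyl_linear[OF a]] linear_scale[OF weyl_linear[OF a]] by simp
  ultimately have "- a \<beta> \<in> \<hh>"
    using hessenberg_set_below[OF \<hh> \<hh>_a_s\<beta> _ \<alpha>(2)] by blast
  then have "a \<beta> \<in> uminus ` \<hh>"
    by (metis image_eqI minus_minus)
  then show ?thesis
    using False \<beta>_pos unfolding fold_refl_def hess_inversions_def by simp
qed

lemma card_hess_inversions_comp_refl_le:
  assumes "hessenberg_set \<Phi> \<Delta> \<hh>" "a \<in> W" "\<alpha> \<in> Pos" "a \<alpha> \<in> Pos"
    and "card (inversions (a \<circ> rs_refl \<alpha>)) = card (inversions a) + 1"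
  shows "card (hess_inversions \<hh> (a \<circ> rs_refl \<alpha>)) \<le> card (hess_inversions \<hh> a) + 1"
proof -
  let ?H\<^sub>v = "hess_inversions \<hh> (a \<circ> rs_refl \<alpha>)" and ?H\<^sub>w = "hess_inversions \<hh> a"
  have "fold_refl \<alpha> ` (?H\<^sub>v - {\<alpha>}) \<subseteq> ?H\<^sub>w"
    using fold_refl_hess_inversions[OF assms] by blast
  moreover have "inj_on (fold_refl \<alpha>) (?H\<^sub>v - {\<alpha>})"
    using assms(3) pos_roots_subset root_nonzero
    by (intro inj_on_subset[OF inj_on_fold_refl]) (auto simp: hess_inversions_def)
  ultimately have "card (?H\<^sub>v - {\<alpha>}) \<le> card ?H\<^sub>w"
    by (intro card_inj_on_le) (simp_all add: finite_hess_inversions)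
  moreover have "card ?H\<^sub>v \<le> card (?H\<^sub>v - {\<alpha>}) + 1"
    by (cases "\<alpha> \<in> ?H\<^sub>v") (simp_all add: card_Diff_singleton_if finite_hess_inversions)
  ultimately show ?thesis
    by linarith
qed

end

theorem corollary2p11:
  fixes \<Phi> \<Delta> \<hh> :: "'a::euclidean_space set" and v w :: "'a \<Rightarrow> 'a"
  assumes "crystallographic_root_system \<Phi>"
    and "is_base \<Phi> \<Delta>"
    and "hessenberg_set \<Phi> \<Delta> \<hh>"
    and "v \<in> weyl_group \<Phi>" and "w \<in> weyl_group \<Phi>"
    and "is_cover \<Phi> \<Delta> v w"
  shows "int (card (inv_set \<Phi> \<Delta> v)) - int (card (pos_roots \<Phi> \<Delta> - \<hh>))
           \<le> int (card (hess_inv_set \<Phi> \<Delta> \<hh> v))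
       \<and> card (hess_inv_set \<Phi> \<Delta> \<hh> v) \<le> card (hess_inv_set \<Phi> \<Delta> \<hh> w) + 1"
proof -
  interpret based_root_system \<Phi> \<Delta>
    using assms(1,2) by (rule based_root_system.intro)
  obtain \<alpha> where \<alpha>: "\<alpha> \<in> Pos" "v = rs_refl \<alpha> \<circ> w" "inv v \<alpha> \<in> Neg"
      "weyl_length \<Delta> v = weyl_length \<Delta> w + 1"
    using assms(6) unfolding is_cover_def by blast
  define a where "a = inv w"
  have a: "a \<in> W"
    unfolding a_def using weyl_inv[OF assms(5)] .
  have inv_v: "inv v = a \<circ> rs_refl \<alpha>"
    unfolding \<alpha>(2) a_def using inv_rs_refl_comp \<alpha>(1) pos_roots_subset assms(5) by blast
  have "- a \<alpha> \<in> Neg"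
    using \<alpha>(3) rs_refl_self[of \<alpha>] linear_neg[OF weyl_linear[OF a]] \<alpha>(1) pos_roots_subset root_nonzero
    unfolding inv_v by auto
  then have "a \<alpha> \<in> Pos"
    unfolding neg_roots_iff by simp
  moreover have "card (inversions (a \<circ> rs_refl \<alpha>)) = card (inversions a) + 1"
    using \<alpha>(4) weyl_length_eq_card_inv_set[OF assms(4)] weyl_length_eq_card_inv_set[OF assms(5)]
    unfolding inv_set_eq_inversions inv_v a_def by simp
  ultimately show ?thesis
    using card_inv_set_le_hess_inv_set[OF assms(4), of \<hh>] card_hess_inversions_comp_refl_le[OF assms(3) a \<alpha>(1)]
    unfolding hess_inv_set_eq_hess_inversions inv_v a_def by linarith
qed

end
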